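(* For $n=0,1,2,\ldots$ let $R_n=\sum_{k=0}^n\binom{n}{k}\binom{n+k}{k}\frac{1}{2k-1}$. Then the sequence $\{R_{n+1}/R_n\}_{n\geq 3}$ is strictly increasing with limit $3+2\sqrt{2}$, and the sequence $\{\sqrt[n+1]{R_{n+1}}/\sqrt[n]{R_n}\}_{n\geq 5}$ is strictly decreasing with limit $1$.
   Context: The paper states this as "Conjecture 1.2 (of Z.-W. Sun) is true"; the claim above is the content of that conjecture. *)

theory Defs
  imports "HOL-Analysis.Analysis"
begin

text \<open>R_n = sum_{k=0}^n C(n,k) C(n+k,k) / (2k-1), with 2k-1 computed in the reals (k = 0 gives -1).\<close>
definition R :: "nat \<Rightarrow> real" where
  "R n = (\<Sum>k=0..n. real (n choose k) * real ((n + k) choose k) / (2 * real k - 1))"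

end

theory Submission
  imports Defs
begin

text \<open>
  Write \<open>D\<^sub>n = \<Sum>\<^sub>k C(n,k) C(n+k,k)\<close> for the central Delannoy numbers. Comparing the summands of
  \<open>R\<^sub>n\<close> and \<open>R\<^sub>n\<^sub>+\<^sub>1\<close> gives \<open>(2n+1) R\<^sub>n\<^sub>+\<^sub>1 = (2n+3) R\<^sub>n + D\<^sub>n + D\<^sub>n\<^sub>+\<^sub>1\<close>; together with the
  Zeilberger recurrence \<open>(n+2) D\<^sub>n\<^sub>+\<^sub>2 = 3(2n+3) D\<^sub>n\<^sub>+\<^sub>1 - (n+1) D\<^sub>n\<close> this makes \<open>R\<^sub>n\<close> satisfy a
  third-order linear recurrence, i.e. the ratios \<open>r\<^sub>n = R\<^sub>n\<^sub>+\<^sub>1 / R\<^sub>n\<close> satisfy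
  \<open>r\<^sub>n\<^sub>+\<^sub>2 = \<Phi>\<^sub>n(r\<^sub>n\<^sub>+\<^sub>1, r\<^sub>n)\<close> for an explicit rational map \<open>\<Phi>\<^sub>n\<close>.

  From \<open>n = 14\<close> on, a window of inequalities on three consecutive ratios propagates under
  \<open>\<Phi>\<^sub>n\<close>: the ratios stay in \<open>[26/5, 59/10]\<close>, increase, successive increments shrink by at
  most a factor 10, and \<open>r\<^sub>n\<^sub>+\<^sub>1 - r\<^sub>n \<le> (48/5)/(n(n+1))\<close>. The finitely many remaining cases are
  computed from the recurrence. The limit \<open>L\<close> then satisfies \<open>L = 7 - 7/L + 1/L\<^sup>2\<close>, whose only
  root above 3 is \<open>3 + 2\<surd>2\<close>.

  For the roots, \<open>ln (\<^sup>n\<^sup>+\<^sup>1\<surd>R\<^sub>n\<^sub>+\<^sub>1 / \<^sup>n\<surd>R\<^sub>n) = t\<^sub>n / (n(n+1))\<close> with \<open>t\<^sub>n = n ln r\<^sub>n - ln R\<^sub>n\<close>.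
  Since \<open>r\<^sub>n\<close> increases so does \<open>t\<^sub>n\<close>, and the decrease of the quotient reduces to
  \<open>n(n+1)(ln r\<^sub>n\<^sub>+\<^sub>1 - ln r\<^sub>n) < 2 t\<^sub>n\<close>, which the \<open>O(1/n\<^sup>2)\<close> increment bound provides.
\<close>

lemma strict_mono_on_atLeast_SucI:
  fixes f :: "nat \<Rightarrow> 'a :: order"
  assumes "\<And>n. a \<le> n \<Longrightarrow> f n < f (Suc n)"
  shows "strict_mono_on {a..} f"
  by (rule monotone_onI) (auto intro: lift_Suc_mono_less_ivl[of "{a..}"] assms)

lemma strict_antimono_on_atLeast_SucI:
  fixes f :: "nat \<Rightarrow> real"
  assumes "\<And>n. a \<le> n \<Longrightarrow> f (Suc n) < f n"
  shows "strict_antimono_on {a..} f"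
proof -
  have "strict_mono_on {a..} (\<lambda>n. - f n)"
    by (rule strict_mono_on_atLeast_SucI) (simp add: assms)
  then show ?thesis by (simp add: monotone_on_def)
qed

section \<open>Central Delannoy numbers\<close>

definition delannoy_term :: "nat \<Rightarrow> nat \<Rightarrow> real" where
  "delannoy_term m k = real (m choose k) * real ((m + k) choose k)"

definition central_delannoy :: "nat \<Rightarrow> real" where
  "central_delannoy n = (\<Sum>k=0..n. delannoy_term n k)"

lemma delannoy_term_eq_0: "m < k \<Longrightarrow> delannoy_term m k = 0"
  by (simp add: delannoy_term_def)

lemma delannoy_term_nonneg: "0 \<le> delannoy_term m k"
  by (simp add: delannoy_term_def)

lemma central_delannoy_nonneg: "0 \<le> central_delannoy n"
  unfolding central_delannoy_def by (intro sum_nonneg) (simp add: delannoy_term_nonneg)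

lemma central_delannoy_eq_sum_lessThan:
  "m < N \<Longrightarrow> central_delannoy m = (\<Sum>k<N. delannoy_term m k)"
  unfolding central_delannoy_def
  by (rule sum.mono_neutral_left) (auto simp: delannoy_term_eq_0)

lemma delannoy_term_Suc_left:
  "(real m + 1 - real k) * delannoy_term (Suc m) k = (real m + 1 + real k) * delannoy_term m k"
proof (cases "k \<le> Suc m")
  case True
  have a: "(Suc m - k) * (Suc m choose k) = Suc m * (m choose k)"
    using binomial_absorb_comp[of "Suc m" k] by simp
  have b: "Suc m * ((Suc m + k) choose k) = (Suc m + k) * ((m + k) choose k)"
    using binomial_absorb_comp[of "Suc m + k" k] by simp
  have "Suc m * ((Suc m - k) * (Suc m choose k) * ((Suc m + k) choose k))
      = Suc m * ((Suc m + k) * (m choose k) * ((m + k) choose k))"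
    by (metis a b mult.assoc mult.left_commute)
  then have "(Suc m - k) * (Suc m choose k) * ((Suc m + k) choose k)
      = (Suc m + k) * (m choose k) * ((m + k) choose k)"
    by (subst (asm) nat_mult_eq_cancel1) simp_all
  then have "real (Suc m - k) * real (Suc m choose k) * real ((Suc m + k) choose k)
      = real (Suc m + k) * real (m choose k) * real ((m + k) choose k)"
    by (metis of_nat_mult)
  with True show ?thesis by (simp add: delannoy_term_def of_nat_diff mult.assoc add.commute)
qed (simp add: delannoy_term_eq_0)

lemma delannoy_term_Suc_right:
  "(real k + 1)^2 * delannoy_term m (Suc k) = (real m - real k) * (real m + real k + 1) * delannoy_term m k"
proof (cases "k \<le> m")
  case True
  have "Suc k * (m choose Suc k) = (m - k) * (m choose k)"
    using binomial_absorption[of k m] binomial_absorb_comp[of m k] by simp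
  then have a: "real (Suc k) * real (m choose Suc k) = (real m - real k) * real (m choose k)"
    using True by (metis of_nat_diff of_nat_mult)
  have b: "real (Suc k) * real ((m + Suc k) choose Suc k) = real (Suc (m + k)) * real ((m + k) choose k)"
    using Suc_times_binomial[of k "m + k"] by (metis add_Suc_right of_nat_mult)
  have "(real k + 1)^2 * delannoy_term m (Suc k)
      = (real (Suc k) * real (m choose Suc k)) * (real (Suc k) * real ((m + Suc k) choose Suc k))"
    unfolding delannoy_term_def by (simp add: power2_eq_square algebra_simps)
  also have "\<dots> = (real m - real k) * (real m + real k + 1) * delannoy_term m k"
    unfolding a b delannoy_term_def by (simp add: algebra_simps)
  finally show ?thesis .
qed (simp add: delannoy_term_eq_0)

text \<open>A Zeilberger certificate for the recurrence of the central Delannoy numbers.\<close>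

definition delannoy_certificate :: "nat \<Rightarrow> nat \<Rightarrow> real" where
  "delannoy_certificate n k =
     - (4 * real n + 6) * (real k)^2 * delannoy_term (n + 2) k / ((real n + real k + 1) * (real n + real k + 2))"

lemma delannoy_certificate_diff:
  "(real n + 2) * delannoy_term (n + 2) k - 3 * (2 * real n + 3) * delannoy_term (n + 1) k
     + (real n + 1) * delannoy_term n k
   = delannoy_certificate n (Suc k) - delannoy_certificate n k"
proof -
  define x c where "x = real n" and "c = real k"
  define X where "X = delannoy_term (n + 2) k"
  have r1: "(x + 2 - c) * X = (x + 2 + c) * delannoy_term (n + 1) k"
    using delannoy_term_Suc_left[of "n + 1" k] unfolding X_def x_def c_def by (simp add: algebra_simps)
  have r2: "(x + 1 - c) * delannoy_term (n + 1) k = (x + 1 + c) * delannoy_term n k"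
    using delannoy_term_Suc_left[of n k] unfolding x_def c_def by simp
  have r3: "(c + 1)^2 * delannoy_term (n + 2) (Suc k) = (x + 2 - c) * (x + c + 3) * X"
    using delannoy_term_Suc_right[of k "n + 2"] unfolding X_def x_def c_def by (simp add: algebra_simps)
  define u v w where "u = 1 / (x + c + 1)" and "v = 1 / (x + c + 2)" and "w = 1 / (x + c + 3)"
  have inv: "u * (x + c + 1) = 1" "v * (x + c + 2) = 1" "w * (x + c + 3) = 1"
    unfolding u_def v_def w_def x_def c_def by (simp_all add: field_simps)
  have "delannoy_certificate n (Suc k) = - (4 * x + 6) * ((c + 1)^2 * delannoy_term (n + 2) (Suc k)) * (v * w)"
    unfolding delannoy_certificate_def v_def w_def x_def c_def by (simp add: field_simps)
  moreover have "delannoy_certificate n k = - (4 * x + 6) * c^2 * X * (u * v)"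
    unfolding delannoy_certificate_def u_def v_def x_def c_def X_def by (simp add: field_simps)
  ultimately have "(x + 2) * X - 3 * (2 * x + 3) * delannoy_term (n + 1) k + (x + 1) * delannoy_term n k
      = delannoy_certificate n (Suc k) - delannoy_certificate n k"
    using inv r1 r2 r3 by algebra
  then show ?thesis unfolding x_def X_def .
qed

lemma central_delannoy_recurrence:
  "(real n + 2) * central_delannoy (n + 2)
     = 3 * (2 * real n + 3) * central_delannoy (n + 1) - (real n + 1) * central_delannoy n"
proof -
  have "(real n + 2) * central_delannoy (n + 2) - 3 * (2 * real n + 3) * central_delannoy (n + 1)
          + (real n + 1) * central_delannoy n
      = (\<Sum>k<n + 3. (real n + 2) * delannoy_term (n + 2) k
          - 3 * (2 * real n + 3) * delannoy_term (n + 1) k + (real n + 1) * delannoy_term n k)"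
    by (simp add: central_delannoy_eq_sum_lessThan[of _ "n + 3"] sum.distrib sum_subtractf
        sum_distrib_left)
  also have "\<dots> = (\<Sum>k<n + 3. delannoy_certificate n (Suc k) - delannoy_certificate n k)"
    by (simp only: delannoy_certificate_diff)
  also have "\<dots> = delannoy_certificate n (n + 3) - delannoy_certificate n 0"
    by (rule sum_lessThan_telescope)
  also have "\<dots> = 0"
    by (simp add: delannoy_certificate_def delannoy_term_eq_0)
  finally show ?thesis by simp
qed

section \<open>A linear recurrence for \<open>R\<close>\<close>

lemma R_eq_sum_delannoy_term: "R n = (\<Sum>k=0..n. delannoy_term n k / (2 * real k - 1))"
  unfolding R_def delannoy_term_def by simp

lemma R_Suc_central_delannoy:
  "(2 * real n + 1) * R (Suc n) = (2 * real n + 3) * R n + central_delannoy n + central_delannoy (Suc n)"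
proof -
  have summand: "(2 * real n + 1) * (delannoy_term (Suc n) k / (2 * real k - 1))
      = (2 * real n + 3) * (delannoy_term n k / (2 * real k - 1))
        + delannoy_term n k + delannoy_term (Suc n) k" for k
  proof -
    have "2 * real k - 1 \<noteq> 0"
    proof
      assume "2 * real k - 1 = 0"
      then have "real (2 * k) = 1" by simp
      then have "2 * k = 1" by linarith
      then show False by presburger
    qed
    then show ?thesis
      using delannoy_term_Suc_left[of n k] by (simp add: field_simps)
  qed
  have "(2 * real n + 1) * R (Suc n)
      = (\<Sum>k=0..Suc n. (2 * real n + 1) * (delannoy_term (Suc n) k / (2 * real k - 1)))"
    unfolding R_eq_sum_delannoy_term by (simp only: sum_distrib_left)
  also have "\<dots> = (\<Sum>k=0..Suc n. (2 * real n + 3) * (delannoy_term n k / (2 * real k - 1))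
                    + delannoy_term n k + delannoy_term (Suc n) k)"
    by (simp only: summand)
  also have "\<dots> = (2 * real n + 3) * R n + central_delannoy n + central_delannoy (Suc n)"
    by (simp add: R_eq_sum_delannoy_term central_delannoy_def sum.distrib sum_distrib_left
        delannoy_term_eq_0)
  finally show ?thesis .
qed

lemma R_recurrence:
  "(real n + 3) * R (n + 3)
     = (7 * real n + 13) * R (n + 2) - (7 * real n + 15) * R (n + 1) + (real n + 1) * R n"
proof -
  define x where "x = real n"
  have e0: "(2 * x + 1) * R (n + 1) = (2 * x + 3) * R n + central_delannoy n + central_delannoy (n + 1)"
    using R_Suc_central_delannoy[of n] unfolding x_def by simp
  have e1: "(2 * x + 3) * R (n + 2)
      = (2 * x + 5) * R (n + 1) + central_delannoy (n + 1) + central_delannoy (n + 2)"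
    using R_Suc_central_delannoy[of "n + 1"] unfolding x_def by (simp add: algebra_simps)
  have e2: "(2 * x + 5) * R (n + 3)
      = (2 * x + 7) * R (n + 2) + central_delannoy (n + 2) + central_delannoy (n + 3)"
    using R_Suc_central_delannoy[of "n + 2"] unfolding x_def by (simp add: algebra_simps numeral_eq_Suc)
  have d0: "(x + 2) * central_delannoy (n + 2)
      = 3 * (2 * x + 3) * central_delannoy (n + 1) - (x + 1) * central_delannoy n"
    using central_delannoy_recurrence[of n] unfolding x_def .
  have d1: "(x + 3) * central_delannoy (n + 3)
      = 3 * (2 * x + 5) * central_delannoy (n + 2) - (x + 2) * central_delannoy (n + 1)"
    using central_delannoy_recurrence[of "n + 1"] unfolding x_def by (simp add: algebra_simps numeral_eq_Suc)
  define p q where "p = 1 / (2 * x + 3)" and "q = 1 / (2 * x + 5)"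
  have inv: "p * (2 * x + 3) = 1" "q * (2 * x + 5) = 1"
    unfolding p_def q_def x_def by (simp_all add: field_simps)
  show ?thesis
    using e0 e1 e2 d0 d1 inv unfolding x_def[symmetric] by algebra
qed

lemma R_0: "R 0 = -1" by (simp add: R_def)
lemma R_1: "R 1 = 1" by (simp add: R_def)
lemma R_2: "R 2 = 7" by (simp add: R_def numeral_eq_Suc)
lemma R_3: "R 3 = 25" using R_recurrence[of 0] R_2 R_1 R_0 by (simp add: eval_nat_numeral)
lemma R_4: "R 4 = 87" using R_recurrence[of 1] R_3 R_2 R_1 by (simp add: eval_nat_numeral)
lemma R_5: "R 5 = 329" using R_recurrence[of 2] R_4 R_3 R_2 by (simp add: eval_nat_numeral)
lemma R_6: "R 6 = 1359" using R_recurrence[of 3] R_5 R_4 R_3 by (simp add: eval_nat_numeral)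
lemma R_7: "R 7 = 6001" using R_recurrence[of 4] R_6 R_5 R_4 by (simp add: eval_nat_numeral)
lemma R_8: "R 8 = 27759" using R_recurrence[of 5] R_7 R_6 R_5 by (simp add: eval_nat_numeral)
lemma R_9: "R 9 = 132689" using R_recurrence[of 6] R_8 R_7 R_6 by (simp add: eval_nat_numeral)
lemma R_10: "R 10 = 649815" using R_recurrence[of 7] R_9 R_8 R_7 by (simp add: eval_nat_numeral)
lemma R_11: "R 11 = 3242377" using R_recurrence[of 8] R_10 R_9 R_8 by (simp add: eval_nat_numeral)
lemma R_12: "R 12 = 16421831" using R_recurrence[of 9] R_11 R_10 R_9 by (simp add: eval_nat_numeral)
lemma R_13: "R 13 = 84196761" using R_recurrence[of 10] R_12 R_11 R_10 by (simp add: eval_nat_numeral)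
lemma R_14: "R 14 = 436129183" using R_recurrence[of 11] R_13 R_12 R_11 by (simp add: eval_nat_numeral)
lemma R_15: "R 15 = 2278835681" using R_recurrence[of 12] R_14 R_13 R_12 by (simp add: eval_nat_numeral)
lemma R_16: "R 16 = 11996748255" using R_recurrence[of 13] R_15 R_14 R_13 by (simp add: eval_nat_numeral)
lemma R_17: "R 17 = 63568974241" using R_recurrence[of 14] R_16 R_15 R_14 by (simp add: eval_nat_numeral)

lemmas R_values = R_1 R_2 R_3 R_4 R_5 R_6 R_7 R_8 R_9 R_10 R_11 R_12 R_13 R_14 R_15 R_16 R_17

lemma R_le_R_Suc: "0 \<le> R n \<Longrightarrow> R n \<le> R (Suc n)"
proof -
  assume "0 \<le> R n"
  then have "(2 * real n + 1) * R n \<le> (2 * real n + 3) * R n + central_delannoy n + central_delannoy (Suc n)"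
    using central_delannoy_nonneg[of n] central_delannoy_nonneg[of "Suc n"] by (simp add: algebra_simps)
  then have "(2 * real n + 1) * R n \<le> (2 * real n + 1) * R (Suc n)"
    by (simp only: R_Suc_central_delannoy)
  then show ?thesis by (simp add: mult_le_cancel_left_pos)
qed

lemma R_ge_1: "1 \<le> n \<Longrightarrow> 1 \<le> R n"
proof (induction n rule: dec_induct)
  case base then show ?case using R_1 by simp
next
  case (step m) then show ?case using R_le_R_Suc[of m] by simp
qed

section \<open>The ratios \<open>R (n + 1) / R n\<close>\<close>

definition ratio :: "nat \<Rightarrow> real" where
  "ratio n = R (Suc n) / R n"

definition ratio_step :: "real \<Rightarrow> real \<Rightarrow> real \<Rightarrow> real" where
  "ratio_step k x y = ((7*k+13) - (7*k+15)/x + (k+1)/(x*y)) / (k+3)"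

lemma ratio_recurrence: "1 \<le> n \<Longrightarrow> ratio (n + 2) = ratio_step (real n) (ratio (n + 1)) (ratio n)"
proof -
  assume n: "1 \<le> n"
  define P Q S T where "P = R n" and "Q = R (n + 1)" and "S = R (n + 2)" and "T = R (n + 3)"
  have ratios: "ratio (n + 2) = T / S" "ratio (n + 1) = S / Q" "ratio n = Q / P"
    unfolding ratio_def P_def Q_def S_def T_def by (simp_all add: numeral_eq_Suc)
  have "0 < P" "0 < Q" "0 < S"
    unfolding P_def Q_def S_def using R_ge_1[of n] R_ge_1[of "n + 1"] R_ge_1[of "n + 2"] n by auto
  then have inv: "inverse P * P = 1" "inverse Q * Q = 1" "inverse S * S = 1"
    "inverse (real n + 3) * (real n + 3) = 1"
    by auto
  have "(real n + 3) * T = (7 * real n + 13) * S - (7 * real n + 15) * Q + (real n + 1) * P"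
    unfolding P_def Q_def S_def T_def by (rule R_recurrence)
  then show ?thesis
    unfolding ratios ratio_step_def divide_inverse inverse_mult_distrib inverse_inverse_eq
    using inv by algebra
qed

text \<open>
  The increment of the ratios splits into a main term, controlled by the two previous increments,
  and a positive forcing term of order \<open>1/k\<^sup>2\<close>.
\<close>

lemma ratio_step_increment:
  assumes "a = ratio_step k b e" "0 < a" "0 < b" "0 < e" "0 \<le> k"
  shows "ratio_step (k+1) a b - a
       = ((a - b) * (7*k+22) - (a - e) * ((k+2)/e)) / (a*b*(k+4))
         + (8 - 6/b + 2/(b*e)) / ((k+3)*(k+4))"
proof -
  have inv: "inverse a * a = 1" "inverse b * b = 1" "inverse e * e = 1"
    "inverse (k+3) * (k+3) = 1" "inverse (k+4) * (k+4) = 1"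
    using assms(2-5) by auto
  have "ratio_step (k+1) a b - ratio_step (k+1) b e
      = ((a - b) * (7*k+22) - (a - e) * ((k+2)/e)) / (a*b*(k+4))"
    unfolding ratio_step_def divide_inverse inverse_mult_distrib using inv by algebra
  moreover have "ratio_step (k+1) b e - ratio_step k b e = (8 - 6/b + 2/(b*e)) / ((k+3)*(k+4))"
    unfolding ratio_step_def divide_inverse inverse_mult_distrib using inv by algebra
  ultimately show ?thesis using assms(1) by simp
qed

lemma ratio_step_le:
  assumes k: "0 \<le> k" and b: "26/5 \<le> b" and a: "26/5 \<le> a" "a \<le> 59/10"
  shows "ratio_step k a b \<le> 59/10"
proof -
  define v where "v = (k+1)/b"
  have v: "0 \<le> v" "v \<le> (k+1)/(26/5)"
    unfolding v_def using k b by (simp, intro divide_left_mono) auto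
  have "(7*k+13) - 59/10*(k+3) \<le> (7*k+15 - (k+1)/(26/5)) / (59/10)"
    using k by (simp add: field_simps)
  also have "\<dots> \<le> (7*k+15 - v) / (59/10)"
    using v by (simp add: divide_right_mono)
  also have "\<dots> \<le> (7*k+15 - v) / a"
    by (rule divide_left_mono) (use k a v in \<open>auto simp: field_simps\<close>)
  finally have "(7*k+13) - (7*k+15 - v) / a \<le> 59/10 * (k+3)" by linarith
  moreover have "(7*k+15 - v) / a = (7*k+15) / a - (k+1) / (a*b)"
    unfolding v_def by (simp add: diff_divide_distrib mult.commute)
  then have "ratio_step k a b = ((7*k+13) - (7*k+15 - v) / a) / (k+3)"
    unfolding ratio_step_def by (simp add: algebra_simps)
  ultimately show ?thesis using k by (simp add: pos_divide_le_eq)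
qed

lemma increment_main_term_bounds:
  fixes k a b e :: real
  assumes k: "0 \<le> k" and e: "26/5 \<le> e" and ord: "e \<le> b" "b \<le> a" "a \<le> 59/10"
    and gap: "a - e \<le> 11 * (a - b)"
  defines "N \<equiv> (a - b) * (7*k+22) - (a - e) * ((k+2)/e)"
  shows "(a - b) / 10 \<le> N / (a*b*(k+4))" and "N / (a*b*(k+4)) \<le> (a - b) * (175/676)"
proof -
  define u where "u = (k+2)/e"
  have ab: "(26/5) * (26/5) \<le> a * b" "a * b \<le> (59/10) * (59/10)"
    using e ord by (intro mult_mono; linarith)+
  have den: "0 < a * b * (k+4)" using e ord k by simp
  have u: "0 \<le> u" "u \<le> (k+2)/(26/5)"
    unfolding u_def using k e by (simp, intro divide_left_mono) auto
  have "(a - e) * u \<le> (11 * (a - b)) * ((k+2)/(26/5))"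
    using gap u ord by (intro mult_mono) auto
  then have main: "(a - b) * ((127*k + 462)/26) \<le> N"
    unfolding N_def u_def[symmetric] by (simp add: field_simps)
  have "(a - b) / 10 * (a*b*(k+4)) = (a - b) * (a*b*(k+4) / 10)" by simp
  also have "\<dots> \<le> (a - b) * ((127*k + 462)/26)"
  proof (rule mult_left_mono)
    have "a * b * (k+4) \<le> (59/10) * (59/10) * (k+4)" using ab k by (intro mult_right_mono) auto
    then show "a * b * (k+4) / 10 \<le> (127*k + 462)/26" using k by simp
  qed (use ord in simp)
  also note main
  finally show "(a - b) / 10 \<le> N / (a*b*(k+4))"
    using den by (simp add: pos_le_divide_eq)
  have "N \<le> (a - b) * (7 * (k+4))"
    unfolding N_def u_def[symmetric] using u ord mult_right_mono[of e a u] by (simp add: algebra_simps)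
  also have "\<dots> \<le> (a - b) * ((175/676) * (a * b * (k+4)))"
  proof (rule mult_left_mono)
    have "(26/5) * (26/5) * (k+4) \<le> a * b * (k+4)" using ab k by (intro mult_right_mono) auto
    then show "7 * (k+4) \<le> (175/676) * (a * b * (k+4))" by linarith
  qed (use ord in simp)
  finally have "N \<le> (a - b) * (175/676) * (a * b * (k+4))" by (simp only: mult.assoc)
  then show "N / (a*b*(k+4)) \<le> (a - b) * (175/676)"
    using den by (simp add: pos_divide_le_eq)
qed

lemma forcing_term_bounds:
  fixes b e :: real
  assumes e: "26/5 \<le> e" and b: "26/5 \<le> b" "b \<le> 59/10"
  shows "0 < 8 - 6/b + 2/(b*e)" and "8 - 6/b + 2/(b*e) \<le> 141/20"
proof -
  have "6/b \<le> 6/(26/5)" using b by (intro divide_left_mono) auto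
  then have "6/b < 8" by simp
  moreover have "0 < 2/(b*e)" using b e by simp
  ultimately show "0 < 8 - 6/b + 2/(b*e)" by linarith
  have "2/e \<le> 2/(26/5)" using e by (intro divide_left_mono) auto
  then have "(73/13)/(59/10) \<le> (6 - 2/e)/b" using b by (intro frac_le) auto
  then have "730/767 \<le> (6 - 2/e)/b" by simp
  moreover have "8 - 6/b + 2/(b*e) = 8 - (6 - 2/e)/b" using b e by (simp add: field_simps)
  ultimately show "8 - 6/b + 2/(b*e) \<le> 141/20" by linarith
qed

lemma increment_bound_step:
  assumes "(14::real) \<le> k"
  shows "(48/5) / ((k+1)*(k+2)) * (175/676) + (141/20) / ((k+3)*(k+4)) \<le> (48/5) / ((k+2)*(k+3))"
proof -
  have "162240 * ((k+1) * ((k+3) * (k+4))) - (8400 * ((k+3) * (k+4)) + 23829 * ((k+1) * (k+2))) * (5*k + 15)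
      = 1095 * k^3 + 163050 * k^2 + 385965 * k - 279990"
    by (simp add: algebra_simps power2_eq_square power3_eq_cube)
  moreover have "0 \<le> 1095 * k^3 + 163050 * k^2" using assms by simp
  ultimately have "(8400 * ((k+3) * (k+4)) + 23829 * ((k+1) * (k+2))) * (5*k + 15)
      \<le> 162240 * ((k+1) * ((k+3) * (k+4)))"
    using assms by linarith
  then show ?thesis using assms by (simp add: divide_simps)
qed

lemma ratio_step_window:
  fixes k e b a :: real
  assumes k: "14 \<le> k" and ord: "26/5 \<le> e" "e < b" "b < a" "a \<le> 59/10"
    and gaps: "b - e \<le> 10 * (a - b)" "a - b \<le> (48/5) / ((k+1)*(k+2))"
    and a: "a = ratio_step k b e"
  defines "c \<equiv> ratio_step (k+1) a b"
  shows "a < c" and "a - b \<le> 10 * (c - a)" and "c - a \<le> (48/5) / ((k+2)*(k+3))"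
    and "c \<le> 59/10"
proof -
  define M where "M = ((a - b) * (7*k+22) - (a - e) * ((k+2)/e)) / (a*b*(k+4))"
  define F where "F = (8 - 6/b + 2/(b*e)) / ((k+3)*(k+4))"
  have increment: "c - a = M + F"
    unfolding c_def M_def F_def using ord k by (intro ratio_step_increment[OF a]) auto
  have M: "(a - b) / 10 \<le> M" "M \<le> (a - b) * (175/676)"
    unfolding M_def using k ord gaps(1) by (intro increment_main_term_bounds; simp)+
  have forcing: "0 < 8 - 6/b + 2/(b*e)" "8 - 6/b + 2/(b*e) \<le> 141/20"
    using ord by (intro forcing_term_bounds; simp)+
  have F: "0 < F" "F \<le> (141/20) / ((k+3)*(k+4))"
    unfolding F_def using k forcing by (simp, intro divide_right_mono) auto
  show "a < c" using increment M(1) F(1) ord(3) by argo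
  show "a - b \<le> 10 * (c - a)" using increment M(1) F(1) by argo
  have "c - a \<le> (48/5) / ((k+1)*(k+2)) * (175/676) + (141/20) / ((k+3)*(k+4))"
    using increment M(2) F(2) mult_right_mono[OF gaps(2), of "175/676"] by linarith
  also have "\<dots> \<le> (48/5) / ((k+2)*(k+3))"
    using k by (rule increment_bound_step)
  finally show "c - a \<le> (48/5) / ((k+2)*(k+3))" .
  show "c \<le> 59/10"
    unfolding c_def using k ord by (intro ratio_step_le) auto
qed

definition ratio_window :: "nat \<Rightarrow> bool" where
  "ratio_window n \<longleftrightarrow>
     26/5 \<le> ratio n \<and> ratio n < ratio (n + 1) \<and> ratio (n + 1) < ratio (n + 2) \<and> ratio (n + 2) \<le> 59/10
     \<and> ratio (n + 1) - ratio n \<le> 10 * (ratio (n + 2) - ratio (n + 1))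
     \<and> ratio (n + 2) - ratio (n + 1) \<le> (48/5) / ((real n + 1) * (real n + 2))"

lemma ratio_window_ge_14: "14 \<le> n \<Longrightarrow> ratio_window n"
proof (induction n rule: dec_induct)
  case base
  show ?case unfolding ratio_window_def ratio_def by (simp add: R_values)
next
  case (step m)
  then have "14 \<le> real m" by simp
  note window = step.IH[unfolded ratio_window_def]
  have "ratio (m + 2) = ratio_step (real m) (ratio (m + 1)) (ratio m)"
    using ratio_recurrence[of m] step.hyps by simp
  note next_window = ratio_step_window[OF \<open>14 \<le> real m\<close> _ _ _ _ _ _ this]
  have "ratio (m + 3) = ratio_step (real m + 1) (ratio (m + 2)) (ratio (m + 1))"
    using ratio_recurrence[of "m + 1"] step.hyps by (simp add: numeral_eq_Suc add.commute)
  then show ?case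
    using window next_window unfolding ratio_window_def
    by (simp add: numeral_eq_Suc algebra_simps)
qed

lemma ratio_pos: "1 \<le> n \<Longrightarrow> 0 < ratio n"
  unfolding ratio_def using R_ge_1[of n] R_ge_1[of "Suc n"] by simp

lemma ratio_strict_increasing: "3 \<le> n \<Longrightarrow> ratio n < ratio (Suc n)"
proof (cases "14 \<le> n")
  case True
  then show ?thesis using ratio_window_ge_14[of n] unfolding ratio_window_def by simp
next
  case False
  moreover assume "3 \<le> n"
  ultimately have "n = 3 \<or> n = 4 \<or> n = 5 \<or> n = 6 \<or> n = 7 \<or> n = 8 \<or> n = 9 \<or> n = 10
    \<or> n = 11 \<or> n = 12 \<or> n = 13"
    by presburger
  then show ?thesis by (elim disjE) (simp_all add: ratio_def R_values)
qed

lemma ratio_le: "3 \<le> n \<Longrightarrow> ratio n \<le> 59/10"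
proof (cases "16 \<le> n")
  case True
  then have "ratio_window (n - 2)" by (intro ratio_window_ge_14) simp
  moreover have "n - 2 + 2 = n" using True by simp
  ultimately show ?thesis unfolding ratio_window_def by metis
next
  case False
  moreover assume "3 \<le> n"
  ultimately have "n = 3 \<or> n = 4 \<or> n = 5 \<or> n = 6 \<or> n = 7 \<or> n = 8 \<or> n = 9 \<or> n = 10
    \<or> n = 11 \<or> n = 12 \<or> n = 13 \<or> n = 14 \<or> n = 15"
    by presburger
  then show ?thesis by (elim disjE) (simp_all add: ratio_def R_values)
qed

lemma ratio_ge: "14 \<le> n \<Longrightarrow> 26/5 \<le> ratio n"
  using ratio_window_ge_14[of n] unfolding ratio_window_def by simp

lemma ratio_relative_increment_bound:
  "5 \<le> n \<Longrightarrow> real n * (real n + 1) * (ratio (Suc n) / ratio n - 1) < 21/10"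
proof (cases "15 \<le> n")
  case True
  then have window: "ratio_window (n - 1)" by (intro ratio_window_ge_14) simp
  have "n - 1 + 1 = n" "n - 1 + 2 = Suc n" "real (n - 1) + 1 = real n" "real (n - 1) + 2 = real n + 1"
    using True by simp_all
  then have increment: "ratio (Suc n) - ratio n \<le> (48/5) / (real n * (real n + 1))"
    using window unfolding ratio_window_def by (simp add: add.commute)
  have r: "26/5 \<le> ratio n" using ratio_ge[of n] True by simp
  have "real n * (real n + 1) * (ratio (Suc n) / ratio n - 1)
      = real n * (real n + 1) * (ratio (Suc n) - ratio n) / ratio n"
    using r by (simp add: field_simps)
  also have "\<dots> \<le> (48/5) / ratio n"
  proof (rule divide_right_mono)
    have "0 < real n * (real n + 1)" using True by simp
    then have "(ratio (Suc n) - ratio n) * (real n * (real n + 1)) \<le> 48/5"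
      using increment by (subst (asm) pos_le_divide_eq)
    then show "real n * (real n + 1) * (ratio (Suc n) - ratio n) \<le> 48/5"
      by (simp only: mult.commute)
  qed (use r in simp)
  also have "\<dots> \<le> (48/5) / (26/5)" using r by (intro divide_left_mono) auto
  also have "\<dots> < 21/10" by simp
  finally show ?thesis .
next
  case False
  moreover assume "5 \<le> n"
  ultimately have "n = 5 \<or> n = 6 \<or> n = 7 \<or> n = 8 \<or> n = 9 \<or> n = 10 \<or> n = 11 \<or> n = 12
    \<or> n = 13 \<or> n = 14"
    by presburger
  then show ?thesis by (elim disjE) (simp_all add: ratio_def R_values)
qed

lemma tendsto_divide_real_add: "(\<lambda>n. c / (real n + a)) \<longlonglongrightarrow> 0"
proof (rule tendsto_divide_0[OF tendsto_const])
  have "filterlim (\<lambda>n. a + real n) at_top sequentially"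
    by (rule filterlim_tendsto_add_at_top[OF tendsto_const filterlim_real_sequentially])
  then show "filterlim (\<lambda>n. real n + a) at_infinity sequentially"
    by (simp add: add.commute filterlim_at_top_imp_at_infinity)
qed

lemma tendsto_ratio_step:
  assumes "x \<longlonglongrightarrow> X" "y \<longlonglongrightarrow> Y" "X \<noteq> 0" "Y \<noteq> 0"
  shows "(\<lambda>n. ratio_step (real n) (x n) (y n)) \<longlonglongrightarrow> 7 - 7/X + 1/(X*Y)"
proof -
  have "ratio_step k p q = (7 - 8/(k+3)) - (7 - 6/(k+3)) / p + (1 - 2/(k+3)) / (p*q)"
    if "0 \<le> k" for k p q :: real
  proof -
    have "(7*k+13) / (k+3) = 7 - 8/(k+3)" "(7*k+15) / (k+3) = 7 - 6/(k+3)" "(k+1) / (k+3) = 1 - 2/(k+3)"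
      using that by (simp_all add: field_simps)
    moreover have "ratio_step k p q = (7*k+13) / (k+3) - (7*k+15) / (k+3) / p + (k+1) / (k+3) / (p*q)"
      unfolding ratio_step_def by (simp add: add_divide_distrib diff_divide_distrib mult.commute)
    ultimately show ?thesis by simp
  qed
  then have "ratio_step (real n) (x n) (y n) = (7 - 8/(real n+3)) - (7 - 6/(real n+3)) / x n
      + (1 - 2/(real n+3)) / (x n * y n)" for n
    by simp
  moreover have "(\<lambda>n. a - c / (real n + 3)) \<longlonglongrightarrow> a" for a c :: real
    using tendsto_diff[OF tendsto_const[of a] tendsto_divide_real_add[of c 3]] by simp
  ultimately show ?thesis
    using assms by (simp only:) (intro tendsto_add tendsto_diff tendsto_divide tendsto_mult; simp)
qed

lemma cubic_root_ge_3:
  fixes x :: real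
  assumes "3 \<le> x" "x^3 - 7*x^2 + 7*x - 1 = 0"
  shows "x = 3 + 2 * sqrt 2"
proof -
  have "(x - 1) * ((x - 3)^2 - (2 * sqrt 2)^2) = 0"
    using assms(2) by (simp add: algebra_simps power2_eq_square power3_eq_cube)
  then have "(x - 3)^2 = (2 * sqrt 2)^2" using assms(1) by simp
  then have "x - 3 = 2 * sqrt 2" by (rule power2_eq_imp_eq) (use assms(1) in auto)
  then show ?thesis by simp
qed

lemma ratio_tendsto: "ratio \<longlonglongrightarrow> 3 + 2 * sqrt 2"
proof -
  have "incseq (\<lambda>m. ratio (m + 3))"
    by (rule incseq_SucI) (use ratio_strict_increasing[of "_ + 3"] in \<open>simp add: less_imp_le\<close>)
  moreover have "\<forall>m. ratio (m + 3) \<le> 59/10" using ratio_le[of "_ + 3"] by simp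
  ultimately obtain L where L: "(\<lambda>m. ratio (m + 3)) \<longlonglongrightarrow> L" "\<forall>m. ratio (m + 3) \<le> L"
    using incseq_convergent by blast
  have lim: "ratio \<longlonglongrightarrow> L" using L(1) by (rule LIMSEQ_offset)
  have "3 \<le> L" using L(2)[rule_format, of 11] ratio_ge[of 14] by simp
  then have "L \<noteq> 0" by simp
  have "(\<lambda>n. ratio_step (real n) (ratio (n + 1)) (ratio n)) \<longlonglongrightarrow> 7 - 7/L + 1/(L*L)"
    using LIMSEQ_ignore_initial_segment[OF lim, of 1] lim
    by (rule tendsto_ratio_step[OF _ _ \<open>L \<noteq> 0\<close> \<open>L \<noteq> 0\<close>])
  moreover have "\<forall>\<^sub>F n in sequentially. ratio_step (real n) (ratio (n + 1)) (ratio n) = ratio (n + 2)"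
    using eventually_ge_at_top[of 1] by eventually_elim (rule ratio_recurrence[symmetric])
  ultimately have "(\<lambda>n. ratio (n + 2)) \<longlonglongrightarrow> 7 - 7/L + 1/(L*L)"
    by (rule Lim_transform_eventually)
  then have "L = 7 - 7/L + 1/(L*L)"
    using LIMSEQ_ignore_initial_segment[OF lim, of 2] LIMSEQ_unique by blast
  then have "L^3 - 7*L^2 + 7*L - 1 = 0"
    using \<open>L \<noteq> 0\<close> by (simp add: field_simps power2_eq_square power3_eq_cube)
  then show ?thesis using lim cubic_root_ge_3 \<open>3 \<le> L\<close> by simp
qed

section \<open>The \<open>n\<close>-th roots\<close>

lemma divided_difference_eq:
  fixes A :: "nat \<Rightarrow> real"
  assumes "n \<noteq> 0"
  shows "A (Suc n) / real (Suc n) - A n / real n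
       = (real n * (A (Suc n) - A n) - A n) / (real n * (real n + 1))"
  using assms by (simp add: field_simps)

lemma divided_second_difference_eq:
  fixes A :: "nat \<Rightarrow> real"
  assumes "n \<noteq> 0"
  shows "real n * (real n + 1) * (real n + 2)
           * ((A (Suc n) / real (Suc n) - A n / real n)
              - (A (Suc (Suc n)) / real (Suc (Suc n)) - A (Suc n) / real (Suc n)))
       = 2 * (real n * (A (Suc n) - A n) - A n)
           - real n * (real n + 1) * ((A (Suc (Suc n)) - A (Suc n)) - (A (Suc n) - A n))"
proof -
  have inv: "inverse (real n) * real n = 1" "inverse (real n + 1) * (real n + 1) = 1"
    "inverse (real n + 2) * (real n + 2) = 1"
    using assms by auto
  show ?thesis
    unfolding of_nat_Suc divide_inverse add.assoc one_add_one using inv by algebra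
qed

definition log_excess :: "nat \<Rightarrow> real" where
  "log_excess n = real n * ln (ratio n) - ln (R n)"

lemma ln_R_Suc: "1 \<le> n \<Longrightarrow> ln (R (Suc n)) - ln (R n) = ln (ratio n)"
  unfolding ratio_def using R_ge_1[of n] R_ge_1[of "Suc n"] by (simp add: ln_div)

lemma log_excess_le_Suc: "3 \<le> n \<Longrightarrow> log_excess n \<le> log_excess (Suc n)"
proof -
  assume n: "3 \<le> n"
  have "log_excess (Suc n) - log_excess n = (real n + 1) * (ln (ratio (Suc n)) - ln (ratio n))"
    unfolding log_excess_def using ln_R_Suc[of n] n by (simp add: algebra_simps)
  moreover have "ln (ratio n) \<le> ln (ratio (Suc n))"
    using ratio_strict_increasing[OF n] ratio_pos[of n] n by simp
  then have "0 \<le> (real n + 1) * (ln (ratio (Suc n)) - ln (ratio n))" by simp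
  ultimately show ?thesis by simp
qed

lemma log_excess_ge_5: "5 \<le> n \<Longrightarrow> log_excess 5 \<le> log_excess n"
proof (induction n rule: dec_induct)
  case (step m) then show ?case using log_excess_le_Suc[of m] by simp
qed simp

lemma exp_21_10_less_13: "exp (21/10) < (13::real)"
proof -
  have "exp (21/10) ^ 10 = exp (real 10 * (21/10))" by (rule exp_of_nat_mult[symmetric])
  also have "\<dots> = exp 1 ^ 21" using exp_of_nat_mult[of 21 1] by simp
  also have "\<dots> \<le> 3 ^ 21" by (intro power_mono exp_le) simp
  also have "\<dots> < (13::real) ^ 10" by simp
  finally show ?thesis by (rule power_less_imp_less_base) simp
qed

lemma log_excess_5: "21/10 < 2 * log_excess 5"
proof -
  have r5: "ratio 5 = 1359 / 329" by (simp add: ratio_def R_values)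
  have "0 < ratio 5" "0 < R 5" by (simp_all add: r5 R_values)
  then have "2 * log_excess 5 = ln (ratio 5 ^ 10 / R 5 ^ 2)"
    by (simp add: log_excess_def ln_div ln_realpow)
  moreover have "ratio 5 ^ 10 / R 5 ^ 2 = 1359^10 / 329^12"
    by (simp add: r5 R_values power_divide)
  moreover have "exp (21/10) < (1359^10 / 329^12 :: real)"
    using exp_21_10_less_13 by simp
  then have "ln (exp (21/10)) < ln (1359^10 / 329^12 :: real)"
    by (rule ln_strict_mono) simp
  ultimately show ?thesis by simp
qed

definition log_root_ratio :: "nat \<Rightarrow> real" where
  "log_root_ratio n = ln (R (Suc n)) / real (Suc n) - ln (R n) / real n"

lemma root_ratio_eq_exp:
  assumes "1 \<le> n"
  shows "root (n + 1) (R (n + 1)) / root n (R n) = exp (log_root_ratio n)"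
proof -
  have "root k (R m) = exp (ln (R m) / real k)" if "0 < k" "1 \<le> m" for k m
    using that R_ge_1[of m] by (simp add: root_powr_inverse powr_def divide_inverse mult.commute)
  then show ?thesis
    using assms by (simp add: log_root_ratio_def exp_diff)
qed

lemma log_root_ratio_eq: "1 \<le> n \<Longrightarrow> log_root_ratio n = log_excess n / (real n * (real n + 1))"
  unfolding log_root_ratio_def log_excess_def
  using divided_difference_eq[of n "\<lambda>n. ln (R n)"] ln_R_Suc[of n] by simp

lemma log_root_ratio_decreasing: "5 \<le> n \<Longrightarrow> log_root_ratio (Suc n) < log_root_ratio n"
proof -
  assume n: "5 \<le> n"
  have "0 < ratio n" "0 < ratio (Suc n)" using ratio_pos n by auto
  then have "ln (ratio (Suc n)) - ln (ratio n) \<le> ratio (Suc n) / ratio n - 1"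
    using ln_le_minus_one[of "ratio (Suc n) / ratio n"] by (simp add: ln_div)
  then have "real n * (real n + 1) * (ln (ratio (Suc n)) - ln (ratio n))
      \<le> real n * (real n + 1) * (ratio (Suc n) / ratio n - 1)"
    by (intro mult_left_mono) auto
  also have "\<dots> < 2 * log_excess n"
    using ratio_relative_increment_bound[OF n] log_excess_5 log_excess_ge_5[OF n] by linarith
  finally have key: "real n * (real n + 1) * (ln (ratio (Suc n)) - ln (ratio n)) < 2 * log_excess n" .
  have "real n * (real n + 1) * (real n + 2) * (log_root_ratio n - log_root_ratio (Suc n))
      = 2 * log_excess n - real n * (real n + 1) * (ln (ratio (Suc n)) - ln (ratio n))"
    using divided_second_difference_eq[of n "\<lambda>n. ln (R n)"] ln_R_Suc[of n] ln_R_Suc[of "Suc n"] n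
    by (simp add: log_root_ratio_def log_excess_def)
  with key have "0 < real n * (real n + 1) * (real n + 2) * (log_root_ratio n - log_root_ratio (Suc n))"
    by simp
  moreover have "0 < real n * (real n + 1) * (real n + 2)" using n by simp
  ultimately show ?thesis by (simp add: zero_less_mult_iff)
qed

lemma log_root_ratio_tendsto: "log_root_ratio \<longlonglongrightarrow> 0"
proof (rule tendsto_sandwich[OF _ _ tendsto_const])
  show "\<forall>\<^sub>F n in sequentially. 0 \<le> log_root_ratio n"
    using eventually_ge_at_top[of 5]
  proof eventually_elim
    case (elim n)
    then show ?case
      using log_excess_5 log_excess_ge_5[OF elim] log_root_ratio_eq[of n] by simp
  qed
  show "\<forall>\<^sub>F n in sequentially. log_root_ratio n \<le> 5 / (real n + 1)"
    using eventually_ge_at_top[of 3]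
  proof eventually_elim
    case (elim n)
    have "ln (ratio n) \<le> 5"
      using ln_le_minus_one[of "ratio n"] ratio_pos[of n] ratio_le[OF elim] elim by simp
    then have "real n * ln (ratio n) \<le> real n * 5" by (intro mult_left_mono) auto
    moreover have "0 \<le> ln (R n)" using R_ge_1[of n] elim by simp
    ultimately have "log_excess n \<le> real n * 5"
      unfolding log_excess_def by linarith
    then have "log_excess n / (real n * (real n + 1)) \<le> real n * 5 / (real n * (real n + 1))"
      by (rule divide_right_mono) simp
    then show ?case using elim log_root_ratio_eq[of n] by simp
  qed
  show "(\<lambda>n. 5 / (real n + 1)) \<longlonglongrightarrow> 0" by (rule tendsto_divide_real_add)
qed

lemma root_ratio_strict_antimono_on:
  "strict_antimono_on {5..} (\<lambda>n. root (n + 1) (R (n + 1)) / root n (R n))"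
proof (rule strict_antimono_on_atLeast_SucI)
  fix n :: nat
  assume "5 \<le> n"
  then show "root (Suc n + 1) (R (Suc n + 1)) / root (Suc n) (R (Suc n))
      < root (n + 1) (R (n + 1)) / root n (R n)"
    using root_ratio_eq_exp[of n] root_ratio_eq_exp[of "Suc n"] log_root_ratio_decreasing[of n]
    by simp
qed

lemma root_ratio_tendsto: "(\<lambda>n. root (n + 1) (R (n + 1)) / root n (R n)) \<longlonglongrightarrow> 1"
proof -
  have "(\<lambda>n. exp (log_root_ratio n)) \<longlonglongrightarrow> exp 0"
    by (intro tendsto_exp log_root_ratio_tendsto)
  moreover have "\<forall>\<^sub>F n in sequentially. exp (log_root_ratio n) = root (n + 1) (R (n + 1)) / root n (R n)"
    using eventually_ge_at_top[of 1] by eventually_elim (rule root_ratio_eq_exp[symmetric])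
  ultimately show ?thesis
    by (simp add: Lim_transform_eventually)
qed

theorem theorem1p4:
  shows "strict_mono_on {3..} (\<lambda>n. R (n + 1) / R n)
       \<and> (\<lambda>n. R (n + 1) / R n) \<longlonglongrightarrow> 3 + 2 * sqrt 2
       \<and> strict_antimono_on {5..} (\<lambda>n. root (n + 1) (R (n + 1)) / root n (R n))
       \<and> (\<lambda>n. root (n + 1) (R (n + 1)) / root n (R n)) \<longlonglongrightarrow> 1"
proof -
  have ratio_eq: "(\<lambda>n. R (n + 1) / R n) = ratio" by (simp add: ratio_def fun_eq_iff)
  have "strict_mono_on {3..} ratio"
    by (rule strict_mono_on_atLeast_SucI) (rule ratio_strict_increasing)
  then show ?thesis
    unfolding ratio_eq using ratio_tendsto root_ratio_strict_antimono_on root_ratio_tendsto by blast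
qed

end
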